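(* Let $\xi>0$ and $f\in\mathcal{C}(\xi)$, and define $f_\xi(x):=\xi^{-1}f(\sqrt{\xi}x)$ for $x\in\mathbb{R}$. Then $f_\xi\in\mathcal{C}(1)$ and $E(f)=\sqrt{\xi}\,E(f_\xi)$. Consequently $r(\xi)=\sqrt{\xi}\,r(1)$ for all $\xi>0$.
   Context: For $x\in\mathbb{R}$, $\mathbb{P}^{\rm BM}_x$ is the law of a one-dimensional Brownian motion $(B_t)_{t\ge 0}$ started at $x$, and $\tau_y:=\inf\{t\ge0:B_t=y\}$. For $\xi>0$, $\mathcal{C}(\xi)$ is the set of functions $f:\mathbb{R}\to[0,\infty)$ that are non-increasing on $(-\infty,0]$, non-decreasing on $[0,\infty)$, with $\lim_{x\to0}f(x)=0$, $\sup_{\mathbb{R}}f\le\xi$ and $\lim_{x\to\infty}f(x)=\xi$. The energy is $E(f):=-\int_{\mathbb{R}}\log\mathbb{P}^{\rm BM}_x(\tau_y\ge f(y)-f(x)\ \forall y\in\mathbb{R})\,\mathrm{d}x$, and $r(\xi):=\inf\{E(f):f\in\mathcal{C}(\xi)\}$. *)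

theory Defs
  imports "HOL-Probability.Probability"
begin

text \<open>A process B (paths indexed by real time; only times t \<ge> 0 matter) on the
  space M is a one-dimensional Brownian motion started at x.\<close>
definition brownian_motion :: "'a measure \<Rightarrow> ('a \<Rightarrow> real \<Rightarrow> real) \<Rightarrow> real \<Rightarrow> bool" where
  "brownian_motion M B x \<longleftrightarrow>
     prob_space M \<and>
     (\<forall>t. (\<lambda>\<omega>. B \<omega> t) \<in> borel_measurable M) \<and>
     (\<forall>\<omega>\<in>space M. B \<omega> 0 = x \<and> continuous_on {0..} (B \<omega>)) \<and>
     (\<forall>s t. 0 \<le> s \<longrightarrow> s < t \<longrightarrow>
        distributed M lborel (\<lambda>\<omega>. B \<omega> t - B \<omega> s) (normal_density 0 (sqrt (t - s)))) \<and>
     (\<forall>ts. sorted_wrt (<) ts \<longrightarrow> (\<forall>t\<in>set ts. 0 \<le> t) \<longrightarrow>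
        prob_space.indep_vars M (\<lambda>_. borel)
          (\<lambda>i \<omega>. B \<omega> (ts ! Suc i) - B \<omega> (ts ! i)) {i. Suc i < length ts})"

text \<open>Hitting time of level y by the path w: inf {t \<ge> 0. w t = y} (with inf of the empty set = \<infinity>).\<close>
definition hitting_time :: "(real \<Rightarrow> real) \<Rightarrow> real \<Rightarrow> ereal" where
  "hitting_time w y = Inf {ereal t | t. 0 \<le> t \<and> w t = y}"

definition admissible :: "real \<Rightarrow> (real \<Rightarrow> real) set" where
  "admissible \<xi> = {f. (\<forall>x. 0 \<le> f x)
      \<and> (\<forall>a b. a \<le> b \<longrightarrow> b \<le> 0 \<longrightarrow> f b \<le> f a)
      \<and> (\<forall>a b. 0 \<le> a \<longrightarrow> a \<le> b \<longrightarrow> f a \<le> f b)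
      \<and> (f \<longlongrightarrow> 0) (at 0)
      \<and> (\<forall>x. f x \<le> \<xi>)
      \<and> (f \<longlongrightarrow> \<xi>) at_top}"

definition neglog :: "real \<Rightarrow> ennreal" where
  "neglog p = (if p \<le> 0 then \<infinity> else ennreal (- ln p))"

text \<open>Energy E(f), relative to a family of Brownian motions: (M x, B x) is a Brownian motion started at x.\<close>
definition energy :: "(real \<Rightarrow> 'a measure) \<Rightarrow> (real \<Rightarrow> 'a \<Rightarrow> real \<Rightarrow> real) \<Rightarrow> (real \<Rightarrow> real) \<Rightarrow> ennreal" where
  "energy M B f = (\<integral>\<^sup>+ x. neglog (measure (M x)
      {\<omega> \<in> space (M x). \<forall>y. ereal (f y - f x) \<le> hitting_time (B x \<omega>) y}) \<partial>lborel)"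

definition rate :: "(real \<Rightarrow> 'a measure) \<Rightarrow> (real \<Rightarrow> 'a \<Rightarrow> real \<Rightarrow> real) \<Rightarrow> real \<Rightarrow> ennreal" where
  "rate M B \<xi> = (INF f \<in> admissible \<xi>. energy M B f)"

end

theory Submission
  imports Defs
begin

text \<open>If B is a Brownian motion started at \<open>sqrt \<xi> * x\<close>, then \<open>W t = B (\<xi> * t) / sqrt \<xi>\<close> is
  one started at x.  The event that all hitting times satisfy \<open>\<tau>\<^sub>y \<ge> f y - f (sqrt \<xi> * x)\<close> is
  the event that \<open>f (B t) \<le> f (sqrt \<xi> * x) + t\<close> for all \<open>t \<ge> 0\<close>, and the time change turns it
  into the corresponding event for W and the rescaled profile \<open>f\<^sub>\<xi>\<close>.  Its probability only
  depends on the law of the path: since the paths are continuous and f is monotone on either side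
  of 0, the event is determined by the running maxima and minima over rational times, hence by the
  finite-dimensional distributions, which are fixed by the independent Gaussian increments.
  Substituting \<open>x \<mapsto> sqrt \<xi> * x\<close> in the energy integral gives \<open>E(f) = sqrt \<xi> * E(f\<^sub>\<xi>)\<close>, and
  since \<open>f \<mapsto> f\<^sub>\<xi>\<close> maps C(\<xi>) onto C(1), also \<open>r(\<xi>) = sqrt \<xi> * r(1)\<close>.\<close>

section \<open>Valley-shaped functions and the class C(\<xi>)\<close>

definition valley :: "(real \<Rightarrow> real) \<Rightarrow> bool" where
  "valley g \<longleftrightarrow> (\<forall>a b. a \<le> b \<longrightarrow> b \<le> 0 \<longrightarrow> g b \<le> g a) \<and> (\<forall>a b. 0 \<le> a \<longrightarrow> a \<le> b \<longrightarrow> g a \<le> g b)"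

lemma admissible_valley: "f \<in> admissible \<xi> \<Longrightarrow> valley f"
  by (simp add: admissible_def valley_def)

lemma valley_antimono: "valley g \<Longrightarrow> a \<le> b \<Longrightarrow> b \<le> 0 \<Longrightarrow> g b \<le> g a"
  and valley_mono: "valley g \<Longrightarrow> 0 \<le> a \<Longrightarrow> a \<le> b \<Longrightarrow> g a \<le> g b"
  unfolding valley_def by blast+

lemma valley_min: "valley g \<Longrightarrow> g 0 \<le> g y"
  using valley_antimono[of g y 0] valley_mono[of g 0 y] by (cases "0 \<le> y") simp_all

lemma valley_le_max:
  assumes "valley g" "m \<le> y" "y \<le> M"
  shows "g y \<le> max (g m) (g M)"
proof (cases "0 \<le> y")
  case True
  then show ?thesis using valley_mono[OF assms(1) True assms(3)] by (simp add: le_max_iff_disj)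
next
  case False
  then show ?thesis using valley_antimono[OF assms(1,2)] by (simp add: le_max_iff_disj)
qed

lemma valley_borel_measurable:
  assumes "valley g"
  shows "g \<in> borel_measurable borel"
proof -
  have "(\<lambda>y. g (max y 0)) \<in> borel_measurable borel"
    using valley_mono[OF assms] by (intro borel_measurable_mono) (simp add: mono_def)
  moreover have "(\<lambda>y. - g (min y 0)) \<in> borel_measurable borel"
    using valley_antimono[OF assms] by (intro borel_measurable_mono) (simp add: mono_def)
  ultimately have "(\<lambda>y. max (g (min y 0)) (g (max y 0))) \<in> borel_measurable borel"
    by (intro borel_measurable_max) (simp_all add: borel_measurable_uminus_eq)
  moreover have "max (g (min y 0)) (g (max y 0)) = g y" for y
    using valley_min[OF assms, of y] by (cases "0 \<le> y") (simp_all add: max.absorb1 max.absorb2)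
  ultimately show ?thesis by simp
qed

lemma valley_rescale:
  assumes "valley g" "s > 0" "k > 0"
  shows "valley (\<lambda>x. g (s * x) * k)"
  using assms unfolding valley_def by (simp add: mult_nonneg_nonpos)

lemma admissible_rescale:
  assumes f: "f \<in> admissible a" and s: "s > 0" and k: "k > 0"
  shows "(\<lambda>x. f (s * x) * k) \<in> admissible (a * k)"
proof -
  have valley: "valley (\<lambda>x. f (s * x) * k)"
    using admissible_valley[OF f] s k by (rule valley_rescale)
  have lim0: "filterlim (\<lambda>x. s * x) (at 0) (at 0)"
    using s by (intro filterlim_atI) (auto intro!: tendsto_eq_intros simp: eventually_at)
  have lim_top: "filterlim (\<lambda>x. s * x) at_top at_top"
    using s by (intro filterlim_tendsto_pos_mult_at_top filterlim_ident) auto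
  show ?thesis
    unfolding admissible_def
  proof (intro CollectI conjI allI impI)
    fix x y :: real
    show "0 \<le> f (s * x) * k" "f (s * x) * k \<le> a * k"
      using f k by (simp_all add: admissible_def)
    show "f (s * y) * k \<le> f (s * x) * k" if "x \<le> y" "y \<le> 0"
      using valley_antimono[OF valley that] by simp
    show "f (s * x) * k \<le> f (s * y) * k" if "0 \<le> x" "x \<le> y"
      using valley_mono[OF valley that] by simp
  next
    show "((\<lambda>x. f (s * x) * k) \<longlongrightarrow> 0) (at 0)"
      using f tendsto_mult_right[OF filterlim_compose[OF _ lim0], of f 0 k]
      by (simp add: admissible_def)
    show "((\<lambda>x. f (s * x) * k) \<longlongrightarrow> a * k) at_top"
      using f tendsto_mult_right[OF filterlim_compose[OF _ lim_top], of f a k]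
      by (simp add: admissible_def)
  qed
qed

lemma admissible_rescale_image:
  assumes "\<xi> > 0"
  shows "(\<lambda>f x. f (sqrt \<xi> * x) / \<xi>) ` admissible \<xi> = admissible 1"
proof
  show "(\<lambda>f x. f (sqrt \<xi> * x) / \<xi>) ` admissible \<xi> \<subseteq> admissible 1"
    using admissible_rescale[of _ \<xi> "sqrt \<xi>" "1 / \<xi>"] assms by auto
  show "admissible 1 \<subseteq> (\<lambda>f x. f (sqrt \<xi> * x) / \<xi>) ` admissible \<xi>"
  proof
    fix g assume "g \<in> admissible 1"
    then have "(\<lambda>x. g (1 / sqrt \<xi> * x) * \<xi>) \<in> admissible \<xi>"
      using admissible_rescale[of g 1 "1 / sqrt \<xi>" \<xi>] assms by simp
    moreover have "g = (\<lambda>x. g (1 / sqrt \<xi> * (sqrt \<xi> * x)) * \<xi> / \<xi>)"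
      using assms by simp
    ultimately show "g \<in> (\<lambda>f x. f (sqrt \<xi> * x) / \<xi>) ` admissible \<xi>"
      by (intro image_eqI) simp_all
  qed
qed

section \<open>Stretching integrals and infima\<close>

text \<open>The integrand of the energy is not known to be measurable, so the change of variables
  is proved from the definition of the integral as a supremum over simple functions.\<close>
lemma nn_integral_lborel_stretch_le:
  fixes h :: "real \<Rightarrow> ennreal"
  assumes c: "c > 0"
  shows "(\<integral>\<^sup>+x. h x \<partial>lborel) \<le> ennreal c * (\<integral>\<^sup>+x. h (c * x) \<partial>lborel)"
  unfolding nn_integral_def[of lborel h]
proof (rule SUP_least, clarsimp)
  fix g assume g: "simple_function lborel g" "g \<le> h"
  have "g \<in> borel_measurable borel"
    using borel_measurable_simple_function[OF g(1)] by simp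
  then have "integral\<^sup>S lborel g = ennreal c * (\<integral>\<^sup>+x. g (c * x) \<partial>lborel)"
    using nn_integral_eq_simple_integral[OF g(1)] nn_integral_real_affine[of g c 0] c by simp
  also have "\<dots> \<le> ennreal c * (\<integral>\<^sup>+x. h (c * x) \<partial>lborel)"
    using g(2) by (auto intro!: mult_left_mono nn_integral_mono simp: le_fun_def)
  finally show "integral\<^sup>S lborel g \<le> ennreal c * (\<integral>\<^sup>+x. h (c * x) \<partial>lborel)" .
qed

lemma nn_integral_lborel_stretch:
  fixes h :: "real \<Rightarrow> ennreal"
  assumes c: "c > 0"
  shows "(\<integral>\<^sup>+x. h x \<partial>lborel) = ennreal c * (\<integral>\<^sup>+x. h (c * x) \<partial>lborel)"
proof (rule antisym)
  show "(\<integral>\<^sup>+x. h x \<partial>lborel) \<le> ennreal c * (\<integral>\<^sup>+x. h (c * x) \<partial>lborel)"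
    using c by (rule nn_integral_lborel_stretch_le)
  have "ennreal c * (\<integral>\<^sup>+x. h (c * x) \<partial>lborel)
      \<le> ennreal c * (ennreal (1 / c) * (\<integral>\<^sup>+x. h (c * (1 / c * x)) \<partial>lborel))"
    using c nn_integral_lborel_stretch_le[of "1 / c" "\<lambda>x. h (c * x)"] by (simp add: mult_left_mono)
  also have "\<dots> = (\<integral>\<^sup>+x. h x \<partial>lborel)"
    using c by (simp add: mult.assoc[symmetric] ennreal_mult[symmetric])
  finally show "ennreal c * (\<integral>\<^sup>+x. h (c * x) \<partial>lborel) \<le> (\<integral>\<^sup>+x. h x \<partial>lborel)" .
qed

lemma ennreal_mult_INF:
  assumes c: "c > 0"
  shows "ennreal c * (INF i\<in>S. h i) = (INF i\<in>S. ennreal c * h i)"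
proof -
  have "bij (\<lambda>y. ennreal c * y)"
  proof (rule bij_betw_byWitness[where f' = "\<lambda>y. ennreal (1 / c) * y"])
    have "ennreal (1 / c) * ennreal c = 1" "ennreal c * ennreal (1 / c) = 1"
      using c by (simp_all add: ennreal_mult[symmetric])
    then show "\<forall>y\<in>UNIV. ennreal (1 / c) * (ennreal c * y) = y"
      "\<forall>y\<in>UNIV. ennreal c * (ennreal (1 / c) * y) = y"
      by (simp_all add: mult.assoc[symmetric])
  qed auto
  then show ?thesis
    using mono_bij_Inf[of "\<lambda>y. ennreal c * y" "h ` S"]
    by (simp add: mono_def mult_left_mono image_comp)
qed

section \<open>Paths observed at rational times\<close>

definition rat_times :: "real set" where
  "rat_times = {q \<in> \<rat>. 0 \<le> q}"

definition running_max :: "(real \<Rightarrow> real) \<Rightarrow> real \<Rightarrow> ereal" where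
  "running_max z q = (SUP s\<in>rat_times \<inter> {..q}. ereal (z s))"

definition running_min :: "(real \<Rightarrow> real) \<Rightarrow> real \<Rightarrow> ereal" where
  "running_min z q = (INF s\<in>rat_times \<inter> {..q}. ereal (z s))"

lemma countable_rat_times: "countable rat_times"
  unfolding rat_times_def using countable_rat by (rule countable_subset[rotated]) auto

lemma running_max_restrict: "running_max (\<lambda>s\<in>rat_times. z s) q = running_max z q"
  unfolding running_max_def by (intro SUP_cong) auto

lemma running_min_restrict: "running_min (\<lambda>s\<in>rat_times. z s) q = running_min z q"
  unfolding running_min_def by (intro INF_cong) auto

lemma running_max_attained:
  assumes w: "continuous_on {0..q} w" and q: "q \<in> rat_times"
  obtains t where "t \<in> {0..q}" "running_max w q = ereal (w t)" "\<forall>s\<in>{0..q}. w s \<le> w t"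
proof -
  have "0 \<le> q" using q by (simp add: rat_times_def)
  then obtain t where t: "t \<in> {0..q}" "\<forall>s\<in>{0..q}. w s \<le> w t"
    using continuous_attains_sup[OF compact_Icc _ w] by auto
  have "running_max w q = ereal (w t)"
    unfolding running_max_def
  proof (rule antisym)
    show "(SUP s\<in>rat_times \<inter> {..q}. ereal (w s)) \<le> ereal (w t)"
      using t by (auto intro!: SUP_least simp: rat_times_def)
    show "ereal (w t) \<le> (SUP s\<in>rat_times \<inter> {..q}. ereal (w s))"
    proof (rule ereal_le_epsilon2)
      fix e :: real assume e: "0 < e"
      have "continuous (at t within {0..q}) w"
        using w t(1) continuous_on_eq_continuous_within by blast
      then obtain d where d: "d > 0" "\<forall>s\<in>{0..q}. dist s t < d \<longrightarrow> dist (w s) (w t) < e"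
        using e unfolding continuous_within_eps_delta by blast
      obtain s where s: "s \<in> rat_times \<inter> {..q}" "dist s t < d"
      proof (cases "t = q")
        case True
        then show ?thesis using that[of q] q d by auto
      next
        case False
        then have "t < min q (t + d)" using t d by auto
        then obtain r where "r \<in> \<rat>" "t < r" "r < min q (t + d)"
          using Rats_dense_in_real by blast
        then show ?thesis using that[of r] t by (auto simp: rat_times_def dist_real_def)
      qed
      have "ereal (w t) \<le> ereal (w s) + ereal e"
        using d(2) s by (auto simp: rat_times_def dist_real_def)
      also have "\<dots> \<le> (SUP s\<in>rat_times \<inter> {..q}. ereal (w s)) + ereal e"
        using s(1) by (intro add_right_mono SUP_upper)
      finally show "ereal (w t) \<le> (SUP s\<in>rat_times \<inter> {..q}. ereal (w s)) + ereal e" .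
    qed
  qed
  with t show ?thesis
    by (intro that[of t]) simp_all
qed

lemma running_min_attained:
  assumes w: "continuous_on {0..q} w" and q: "q \<in> rat_times"
  obtains t where "t \<in> {0..q}" "running_min w q = ereal (w t)" "\<forall>s\<in>{0..q}. w t \<le> w s"
proof -
  have "continuous_on {0..q} (\<lambda>s. - w s)"
    using w by (intro continuous_intros)
  then obtain t where t: "t \<in> {0..q}" "running_max (\<lambda>s. - w s) q = ereal (- w t)"
    "\<forall>s\<in>{0..q}. - w s \<le> - w t"
    using q by (rule running_max_attained)
  have "running_min w q = - running_max (\<lambda>s. - w s) q"
    unfolding running_min_def running_max_def
    by (subst ereal_INF_uminus_eq[symmetric]) simp
  then have "running_min w q = ereal (w t)"
    using t(2) by simp
  moreover have "\<forall>s\<in>{0..q}. w t \<le> w s"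
    using t(3) by simp
  ultimately show ?thesis
    using t(1) by (intro that[of t]) simp_all
qed

text \<open>As g need not be continuous, the values of a path at rational times do not control
  g along the path, but its running extremes do, g being monotone on either side of 0.  So for
  continuous paths this condition is equivalent to staying below the line c + t, and unlike the
  latter it is measurable on the product space over the rational times.\<close>
definition sampled_below :: "(real \<Rightarrow> real) \<Rightarrow> real \<Rightarrow> (real \<Rightarrow> real) \<Rightarrow> bool" where
  "sampled_below g c z \<longleftrightarrow>
     (\<forall>q\<in>rat_times. \<forall>m\<in>{running_min z q, running_max z q}. m \<in> ereal ` {y. g y \<le> c + q})"

lemma below_line_iff_sampled_below:
  assumes w: "continuous_on {0..} w" and g: "valley g"
  shows "(\<forall>t\<ge>0. g (w t) \<le> c + t) \<longleftrightarrow> sampled_below g c w"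
proof
  assume below: "\<forall>t\<ge>0. g (w t) \<le> c + t"
  show "sampled_below g c w"
    unfolding sampled_below_def
  proof (intro ballI)
    fix q m assume q: "q \<in> rat_times" and m: "m \<in> {running_min w q, running_max w q}"
    have wq: "continuous_on {0..q} w" using w by (rule continuous_on_subset) auto
    obtain t0 where t0: "t0 \<in> {0..q}" "running_min w q = ereal (w t0)"
      using running_min_attained[OF wq q] by blast
    obtain t1 where t1: "t1 \<in> {0..q}" "running_max w q = ereal (w t1)"
      using running_max_attained[OF wq q] by blast
    have "g (w t0) \<le> c + q" "g (w t1) \<le> c + q"
      using below t0(1) t1(1) by force+
    then show "m \<in> ereal ` {y. g y \<le> c + q}"
      using m t0(2) t1(2) by auto
  qed
next
  assume sampled: "sampled_below g c w"
  show "\<forall>t\<ge>0. g (w t) \<le> c + t"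
  proof (rule ccontr)
    assume "\<not> (\<forall>t\<ge>0. g (w t) \<le> c + t)"
    then obtain t where t: "t \<ge> 0" "c + t < g (w t)" by auto
    then obtain q where q: "q \<in> \<rat>" "t < q" "c + q < g (w t)"
      using Rats_dense_in_real[of t "g (w t) - c"] by auto
    then have q': "q \<in> rat_times" using t by (simp add: rat_times_def)
    have wq: "continuous_on {0..q} w" using w by (rule continuous_on_subset) auto
    obtain t0 where t0: "running_min w q = ereal (w t0)" "\<forall>s\<in>{0..q}. w t0 \<le> w s"
      using running_min_attained[OF wq q'] by blast
    obtain t1 where t1: "running_max w q = ereal (w t1)" "\<forall>s\<in>{0..q}. w s \<le> w t1"
      using running_max_attained[OF wq q'] by blast
    have "running_min w q \<in> ereal ` {y. g y \<le> c + q}" "running_max w q \<in> ereal ` {y. g y \<le> c + q}"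
      using sampled q' unfolding sampled_below_def by blast+
    then have "g (w t0) \<le> c + q" "g (w t1) \<le> c + q"
      unfolding t0(1) t1(1) by auto
    moreover have "g (w t) \<le> max (g (w t0)) (g (w t1))"
      using t(1) q(2) t0(2) t1(2) by (intro valley_le_max[OF g]) auto
    ultimately show False
      using q(3) by linarith
  qed
qed

lemma sets_ereal_image:
  assumes "U \<in> sets borel"
  shows "ereal ` U \<in> sets borel"
proof -
  have "ereal ` U = {m. \<bar>m\<bar> \<noteq> \<infinity> \<and> real_of_ereal m \<in> U}"
    by (auto simp: image_iff)
  also have "\<dots> \<in> sets borel"
    using assms by measurable
  finally show ?thesis .
qed

lemma sets_sampled_below:
  assumes g: "valley g"
  shows "{z \<in> space (PiM rat_times (\<lambda>_. borel)). sampled_below g c z} \<in> sets (PiM rat_times (\<lambda>_. borel))"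
proof -
  have [measurable]: "g \<in> borel_measurable borel"
    using g by (rule valley_borel_measurable)
  have [measurable]: "ereal ` {y. g y \<le> c + q} \<in> sets borel" for q
    by (intro sets_ereal_image) measurable
  have countable: "countable (rat_times \<inter> {..q})" for q
    using countable_rat_times by auto
  have [measurable]: "(\<lambda>z. running_max z q) \<in> borel_measurable (PiM rat_times (\<lambda>_. borel))"
    "(\<lambda>z. running_min z q) \<in> borel_measurable (PiM rat_times (\<lambda>_. borel))" for q
    unfolding running_max_def running_min_def
    by (intro borel_measurable_SUP borel_measurable_INF countable; measurable)+
  show ?thesis
    unfolding sampled_below_def
    by (intro sets.sets_Collect_countable_All' countable_rat_times) simp
qed

lemma sampled_below_restrict: "sampled_below g c (\<lambda>q\<in>rat_times. z q) = sampled_below g c z"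
  by (simp add: sampled_below_def running_max_restrict running_min_restrict)

section \<open>Brownian motion\<close>

lemma (in prob_space) distributed_normal_divide:
  assumes "distributed M lborel X (normal_density \<mu> \<sigma>)" "\<sigma> > 0" "c > 0"
  shows "distributed M lborel (\<lambda>\<omega>. X \<omega> / c) (normal_density (\<mu> / c) (\<sigma> / c))"
  using normal_density_affine[OF assms(1,2), of "1 / c" 0] assms(3) by simp

lemma brownian_motion_scale:
  assumes BM: "brownian_motion M B x" and \<xi>: "\<xi> > 0"
  shows "brownian_motion M (\<lambda>\<omega> t. B \<omega> (\<xi> * t) / sqrt \<xi>) (x / sqrt \<xi>)"
proof -
  have ps: "prob_space M" and meas: "\<And>t. (\<lambda>\<omega>. B \<omega> t) \<in> borel_measurable M"
    and path: "\<And>\<omega>. \<omega> \<in> space M \<Longrightarrow> B \<omega> 0 = x \<and> continuous_on {0..} (B \<omega>)"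
    and incr: "\<And>s t. 0 \<le> s \<Longrightarrow> s < t \<Longrightarrow>
        distributed M lborel (\<lambda>\<omega>. B \<omega> t - B \<omega> s) (normal_density 0 (sqrt (t - s)))"
    and indep: "\<And>ts. sorted_wrt (<) ts \<Longrightarrow> (\<forall>t\<in>set ts. 0 \<le> t) \<Longrightarrow>
        prob_space.indep_vars M (\<lambda>_. borel) (\<lambda>i \<omega>. B \<omega> (ts ! Suc i) - B \<omega> (ts ! i)) {i. Suc i < length ts}"
    using BM unfolding brownian_motion_def by auto
  interpret prob_space M by (rule ps)
  have sq: "sqrt \<xi> > 0" using \<xi> by simp
  show ?thesis unfolding brownian_motion_def
  proof (intro conjI allI impI ballI)
    show "prob_space M" by (rule ps)
    show "(\<lambda>\<omega>. B \<omega> (\<xi> * t) / sqrt \<xi>) \<in> borel_measurable M" for t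
      using meas by measurable
    fix \<omega> assume \<omega>: "\<omega> \<in> space M"
    show "B \<omega> (\<xi> * 0) / sqrt \<xi> = x / sqrt \<xi>" using path[OF \<omega>] by simp
    have "continuous_on {0..} (\<lambda>t. B \<omega> (\<xi> * t))"
      using path[OF \<omega>] \<xi>
      by (intro continuous_on_compose2[of "{0..}" "B \<omega>" "{0..}" "\<lambda>t. \<xi> * t"] continuous_intros) auto
    then show "continuous_on {0..} (\<lambda>t. B \<omega> (\<xi> * t) / sqrt \<xi>)"
      using sq by (intro continuous_intros) auto
  next
    fix s t :: real assume st: "0 \<le> s" "s < t"
    have "distributed M lborel (\<lambda>\<omega>. B \<omega> (\<xi> * t) - B \<omega> (\<xi> * s)) (normal_density 0 (sqrt (\<xi> * t - \<xi> * s)))"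
      using incr[of "\<xi> * s" "\<xi> * t"] st \<xi> by simp
    then have "distributed M lborel (\<lambda>\<omega>. (B \<omega> (\<xi> * t) - B \<omega> (\<xi> * s)) / sqrt \<xi>)
        (normal_density (0 / sqrt \<xi>) (sqrt (\<xi> * t - \<xi> * s) / sqrt \<xi>))"
      using st \<xi> by (intro distributed_normal_divide) simp_all
    moreover have "sqrt (\<xi> * t - \<xi> * s) / sqrt \<xi> = sqrt (t - s)"
      using \<xi> by (simp add: right_diff_distrib[symmetric] real_sqrt_mult)
    ultimately show "distributed M lborel (\<lambda>\<omega>. B \<omega> (\<xi> * t) / sqrt \<xi> - B \<omega> (\<xi> * s) / sqrt \<xi>)
        (normal_density 0 (sqrt (t - s)))"
      by (simp add: diff_divide_distrib)
  next
    fix ts :: "real list" assume ts: "sorted_wrt (<) ts" "\<forall>t\<in>set ts. 0 \<le> t"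
    let ?ts = "map (\<lambda>t. \<xi> * t) ts"
    have "sorted_wrt (<) ?ts" "\<forall>t\<in>set ?ts. 0 \<le> t"
      using ts \<xi> by (auto simp: sorted_wrt_map elim!: sorted_wrt_mono_rel[rotated])
    then have "indep_vars (\<lambda>_. borel) (\<lambda>i \<omega>. (B \<omega> (?ts ! Suc i) - B \<omega> (?ts ! i)) / sqrt \<xi>)
        {i. Suc i < length ?ts}"
      by (intro indep_vars_compose2[where Y = "\<lambda>_ y. y / sqrt \<xi>", OF indep]) auto
    then show "indep_vars (\<lambda>_. borel)
        (\<lambda>i \<omega>. B \<omega> (\<xi> * ts ! Suc i) / sqrt \<xi> - B \<omega> (\<xi> * ts ! i) / sqrt \<xi>) {i. Suc i < length ts}"
      by (rule indep_vars_cong[THEN iffD1, rotated 3]) (auto simp: diff_divide_distrib)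
  qed
qed

lemma brownian_motion_increments_distr:
  assumes BM: "brownian_motion M B x"
    and ts: "sorted_wrt (<) ts" "\<forall>t\<in>set ts. 0 \<le> t" "2 \<le> length ts"
  defines "I \<equiv> {i. Suc i < length ts}"
  shows "distr M (PiM I (\<lambda>_. borel)) (\<lambda>\<omega>. \<lambda>i\<in>I. B \<omega> (ts ! Suc i) - B \<omega> (ts ! i))
       = PiM I (\<lambda>i. density lborel (normal_density 0 (sqrt (ts ! Suc i - ts ! i))))"
proof -
  have ps: "prob_space M" and meas: "\<And>t. (\<lambda>\<omega>. B \<omega> t) \<in> borel_measurable M"
    and incr: "\<And>s t. 0 \<le> s \<Longrightarrow> s < t \<Longrightarrow>
        distributed M lborel (\<lambda>\<omega>. B \<omega> t - B \<omega> s) (normal_density 0 (sqrt (t - s)))"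
    and indep: "prob_space.indep_vars M (\<lambda>_. borel) (\<lambda>i \<omega>. B \<omega> (ts ! Suc i) - B \<omega> (ts ! i)) I"
    using BM ts unfolding brownian_motion_def I_def by auto
  interpret prob_space M by (rule ps)
  have "I \<noteq> {}"
    using ts(3) by (auto simp: I_def intro!: exI[of _ 0])
  then have "distr M (PiM I (\<lambda>_. borel)) (\<lambda>\<omega>. \<lambda>i\<in>I. B \<omega> (ts ! Suc i) - B \<omega> (ts ! i))
      = PiM I (\<lambda>i. distr M borel (\<lambda>\<omega>. B \<omega> (ts ! Suc i) - B \<omega> (ts ! i)))"
    using indep meas by (subst indep_vars_iff_distr_eq_PiM[symmetric]) auto
  also have "\<dots> = PiM I (\<lambda>i. density lborel (normal_density 0 (sqrt (ts ! Suc i - ts ! i))))"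
  proof (rule PiM_cong[OF refl])
    fix i assume "i \<in> I"
    then have "0 \<le> ts ! i" "ts ! i < ts ! Suc i"
      using ts by (auto simp: I_def sorted_wrt_iff_nth_less)
    then have "distr M lborel (\<lambda>\<omega>. B \<omega> (ts ! Suc i) - B \<omega> (ts ! i))
        = density lborel (normal_density 0 (sqrt (ts ! Suc i - ts ! i)))"
      using incr by (simp add: distributed_def)
    then show "distr M borel (\<lambda>\<omega>. B \<omega> (ts ! Suc i) - B \<omega> (ts ! i))
        = density lborel (normal_density 0 (sqrt (ts ! Suc i - ts ! i)))"
      by (metis distr_cong sets_lborel)
  qed
  finally show ?thesis .
qed

lemma strict_sorted_steps_before:
  fixes ts :: "'a::linorder list"
  assumes sorted: "sorted_wrt (<) ts" and k: "k < length ts"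
  shows "{i. Suc i < length ts \<and> ts ! Suc i \<le> ts ! k} = {..<k}"
proof -
  have less: "ts ! a < ts ! b" if "a < b" "b < length ts" for a b
    using sorted that by (simp add: sorted_wrt_iff_nth_less)
  show ?thesis
  proof (intro set_eqI iffI)
    fix i assume "i \<in> {i. Suc i < length ts \<and> ts ! Suc i \<le> ts ! k}"
    then show "i \<in> {..<k}"
      using less[of k "Suc i"] by (cases "k < Suc i") auto
  next
    fix i assume "i \<in> {..<k}"
    then show "i \<in> {i. Suc i < length ts \<and> ts ! Suc i \<le> ts ! k}"
      using k less[of "Suc i" k] by (cases "Suc i = k") auto
  qed
qed

text \<open>The time 1 is added only to guarantee at least one increment.\<close>
definition time_grid :: "real set \<Rightarrow> real list" where
  "time_grid J = 0 # sorted_list_of_set (insert 1 (J - {0}))"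

lemma time_grid:
  assumes "finite J" "J \<subseteq> {0..}"
  shows "sorted_wrt (<) (time_grid J)" "\<forall>t\<in>set (time_grid J). 0 \<le> t"
    "J \<subseteq> set (time_grid J)" "time_grid J ! 0 = 0" "2 \<le> length (time_grid J)"
proof -
  let ?S = "insert 1 (J - {0})"
  have S: "finite ?S"
    using assms(1) by simp
  have pos: "\<forall>y\<in>?S. 0 < y"
    using assms(2) by force
  show "sorted_wrt (<) (time_grid J)" "\<forall>t\<in>set (time_grid J). 0 \<le> t" "J \<subseteq> set (time_grid J)"
    unfolding time_grid_def using assms(2) pos strict_sorted_list_of_set[of ?S] set_sorted_list_of_set[OF S]
    by auto
  show "time_grid J ! 0 = 0" by (simp add: time_grid_def)
  have "sorted_list_of_set ?S \<noteq> []"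
    using S(1) by simp
  then show "2 \<le> length (time_grid J)"
    by (simp add: time_grid_def Suc_le_eq del: length_sorted_list_of_set)
qed

text \<open>The right-hand side depends on x and J only.\<close>
lemma brownian_motion_fdd:
  assumes BM: "brownian_motion M B x" and J: "finite J" "J \<subseteq> {0..}"
  defines "ts \<equiv> time_grid J" and "I \<equiv> {i. Suc i < length (time_grid J)}"
  shows "distr M (PiM J (\<lambda>_. borel)) (\<lambda>\<omega>. \<lambda>j\<in>J. B \<omega> j)
       = distr (PiM I (\<lambda>i. density lborel (normal_density 0 (sqrt (ts ! Suc i - ts ! i)))))
           (PiM J (\<lambda>_. borel)) (\<lambda>d. \<lambda>j\<in>J. x + (\<Sum>i | i \<in> I \<and> ts ! Suc i \<le> j. d i))"
proof -
  have meas: "\<And>t. (\<lambda>\<omega>. B \<omega> t) \<in> borel_measurable M" and start: "\<And>\<omega>. \<omega> \<in> space M \<Longrightarrow> B \<omega> 0 = x"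
    using BM unfolding brownian_motion_def by auto
  note grid = time_grid[OF J, folded ts_def]
  define D where "D = (\<lambda>\<omega>. \<lambda>i\<in>I. B \<omega> (ts ! Suc i) - B \<omega> (ts ! i))"
  define \<Phi> where "\<Phi> = (\<lambda>d. \<lambda>j\<in>J. x + (\<Sum>i | i \<in> I \<and> ts ! Suc i \<le> j. d i))"
  have D: "D \<in> measurable M (PiM I (\<lambda>_. borel))"
    unfolding D_def using meas by (intro measurable_restrict borel_measurable_diff) auto
  have \<Phi>: "\<Phi> \<in> measurable (PiM I (\<lambda>_. borel)) (PiM J (\<lambda>_. borel))"
    unfolding \<Phi>_def
    by (intro measurable_restrict borel_measurable_add borel_measurable_const borel_measurable_sum
        measurable_component_singleton) auto
  have "B \<omega> j = \<Phi> (D \<omega>) j" if \<omega>: "\<omega> \<in> space M" and j: "j \<in> J" for \<omega> j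
  proof -
    obtain k where k: "k < length ts" "ts ! k = j"
      using grid(3) j by (metis in_set_conv_nth subsetD)
    have "{i. i \<in> I \<and> ts ! Suc i \<le> ts ! k} = {..<k}"
      using strict_sorted_steps_before[OF grid(1) k(1)] by (simp add: I_def ts_def)
    then have "\<Phi> (D \<omega>) j = x + (\<Sum>i<k. B \<omega> (ts ! Suc i) - B \<omega> (ts ! i))"
      using j k by (simp add: \<Phi>_def D_def I_def ts_def)
    also have "\<dots> = B \<omega> j"
      using sum_lessThan_telescope[of "\<lambda>i. B \<omega> (ts ! i)" k] grid(4) start[OF \<omega>] k(2) by simp
    finally show ?thesis by simp
  qed
  then have "distr M (PiM J (\<lambda>_. borel)) (\<lambda>\<omega>. \<lambda>j\<in>J. B \<omega> j) = distr M (PiM J (\<lambda>_. borel)) (\<Phi> \<circ> D)"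
    by (intro distr_cong) (auto simp: \<Phi>_def)
  also have "\<dots> = distr (distr M (PiM I (\<lambda>_. borel)) D) (PiM J (\<lambda>_. borel)) \<Phi>"
    using \<Phi> D by (rule distr_distr[symmetric])
  also have "distr M (PiM I (\<lambda>_. borel)) D
      = PiM I (\<lambda>i. density lborel (normal_density 0 (sqrt (ts ! Suc i - ts ! i))))"
    using brownian_motion_increments_distr[OF BM grid(1,2,5)] by (simp add: D_def I_def ts_def)
  finally show ?thesis by (simp only: \<Phi>_def)
qed

lemma emeasure_distr_restrict_prod_emb:
  assumes B: "\<And>t. t \<in> T \<Longrightarrow> (\<lambda>\<omega>. B \<omega> t) \<in> measurable M (N t)"
    and J: "J \<subseteq> T" and E: "E \<in> sets (PiM J N)"
  shows "emeasure (distr M (PiM T N) (\<lambda>\<omega>. \<lambda>t\<in>T. B \<omega> t)) (prod_emb T N J E)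
       = emeasure (distr M (PiM J N) (\<lambda>\<omega>. \<lambda>t\<in>J. B \<omega> t)) E"
proof -
  have B_T: "(\<lambda>\<omega>. \<lambda>t\<in>T. B \<omega> t) \<in> measurable M (PiM T N)"
    using B by (rule measurable_restrict)
  have "emeasure (distr M (PiM T N) (\<lambda>\<omega>. \<lambda>t\<in>T. B \<omega> t)) (prod_emb T N J E)
      = emeasure (distr (distr M (PiM T N) (\<lambda>\<omega>. \<lambda>t\<in>T. B \<omega> t)) (PiM J N) (\<lambda>f. restrict f J)) E"
    using J E by (intro emeasure_distr_restrict[symmetric]) simp_all
  also have "distr (distr M (PiM T N) (\<lambda>\<omega>. \<lambda>t\<in>T. B \<omega> t)) (PiM J N) (\<lambda>f. restrict f J)
      = distr M (PiM J N) ((\<lambda>f. restrict f J) \<circ> (\<lambda>\<omega>. \<lambda>t\<in>T. B \<omega> t))"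
    using J B_T by (intro distr_distr measurable_restrict_subset)
  also have "\<dots> = distr M (PiM J N) (\<lambda>\<omega>. \<lambda>t\<in>J. B \<omega> t)"
    using J by (intro distr_cong) (auto simp: fun_eq_iff)
  finally show ?thesis .
qed

lemma brownian_motion_law_eq:
  assumes BM1: "brownian_motion M1 B1 x" and BM2: "brownian_motion M2 B2 x" and T: "T \<subseteq> {0..}"
  shows "distr M1 (PiM T (\<lambda>_. borel)) (\<lambda>\<omega>. \<lambda>t\<in>T. B1 \<omega> t)
       = distr M2 (PiM T (\<lambda>_. borel)) (\<lambda>\<omega>. \<lambda>t\<in>T. B2 \<omega> t)"
proof (rule measure_eqI_PiM_infinite)
  have ps1: "prob_space M1" and meas1: "\<And>t. (\<lambda>\<omega>. B1 \<omega> t) \<in> borel_measurable M1"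
    and meas2: "\<And>t. (\<lambda>\<omega>. B2 \<omega> t) \<in> borel_measurable M2"
    using BM1 BM2 unfolding brownian_motion_def by auto
  show "finite_measure (distr M1 (PiM T (\<lambda>_. borel)) (\<lambda>\<omega>. \<lambda>t\<in>T. B1 \<omega> t))"
    by (intro prob_space.finite_measure prob_space.prob_space_distr[OF ps1] measurable_restrict meas1)
  fix J and A :: "real \<Rightarrow> real set"
  assume J: "finite J" "J \<subseteq> T" and A: "\<And>i. i \<in> J \<Longrightarrow> A i \<in> sets borel"
  have E: "Pi\<^sub>E J A \<in> sets (PiM J (\<lambda>_. borel))"
    using J(1) A by (rule sets_PiM_I_finite)
  have "J \<subseteq> {0..}"
    using J(2) T by blast
  then show "emeasure (distr M1 (PiM T (\<lambda>_. borel)) (\<lambda>\<omega>. \<lambda>t\<in>T. B1 \<omega> t)) (prod_emb T (\<lambda>_. borel) J (Pi\<^sub>E J A))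
      = emeasure (distr M2 (PiM T (\<lambda>_. borel)) (\<lambda>\<omega>. \<lambda>t\<in>T. B2 \<omega> t)) (prod_emb T (\<lambda>_. borel) J (Pi\<^sub>E J A))"
    using emeasure_distr_restrict_prod_emb[OF meas1 J(2) E] emeasure_distr_restrict_prod_emb[OF meas2 J(2) E]
      brownian_motion_fdd[OF BM1 J(1)] brownian_motion_fdd[OF BM2 J(1)]
    by simp
qed simp_all

lemma prob_below_line_eq_sampled:
  assumes BM: "brownian_motion M B x" and g: "valley g"
  shows "measure M {\<omega> \<in> space M. \<forall>t\<ge>0. g (B \<omega> t) \<le> c + t}
       = measure (distr M (PiM rat_times (\<lambda>_. borel)) (\<lambda>\<omega>. \<lambda>q\<in>rat_times. B \<omega> q))
           {z \<in> space (PiM rat_times (\<lambda>_. borel)). sampled_below g c z}"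
proof -
  have meas: "\<And>t. (\<lambda>\<omega>. B \<omega> t) \<in> borel_measurable M"
    and cont: "\<And>\<omega>. \<omega> \<in> space M \<Longrightarrow> continuous_on {0..} (B \<omega>)"
    using BM unfolding brownian_motion_def by auto
  have B_rat: "(\<lambda>\<omega>. \<lambda>q\<in>rat_times. B \<omega> q) \<in> measurable M (PiM rat_times (\<lambda>_. borel))"
    using meas by (rule measurable_restrict)
  have "{\<omega> \<in> space M. \<forall>t\<ge>0. g (B \<omega> t) \<le> c + t}
      = (\<lambda>\<omega>. \<lambda>q\<in>rat_times. B \<omega> q) -` {z \<in> space (PiM rat_times (\<lambda>_. borel)). sampled_below g c z} \<inter> space M"
    using below_line_iff_sampled_below[OF cont g] measurable_space[OF B_rat]
    by (auto simp: sampled_below_restrict)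
  then show ?thesis
    using measure_distr[OF B_rat sets_sampled_below[OF g]] by simp
qed

lemma brownian_motion_prob_below_line_eq:
  assumes "brownian_motion M1 B1 x" "brownian_motion M2 B2 x" "valley g"
  shows "measure M1 {\<omega> \<in> space M1. \<forall>t\<ge>0. g (B1 \<omega> t) \<le> c + t}
       = measure M2 {\<omega> \<in> space M2. \<forall>t\<ge>0. g (B2 \<omega> t) \<le> c + t}"
proof -
  have "rat_times \<subseteq> {0..}"
    by (auto simp: rat_times_def)
  then show ?thesis
    using prob_below_line_eq_sampled[OF assms(1,3)] prob_below_line_eq_sampled[OF assms(2,3)]
      brownian_motion_law_eq[OF assms(1,2)] by simp
qed

section \<open>Scaling of the energy\<close>

lemma hitting_time_ge_iff:
  "(\<forall>y. ereal (g y - c) \<le> hitting_time w y) \<longleftrightarrow> (\<forall>t\<ge>0. g (w t) \<le> c + t)"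
proof
  assume ge: "\<forall>y. ereal (g y - c) \<le> hitting_time w y"
  show "\<forall>t\<ge>0. g (w t) \<le> c + t"
  proof (intro allI impI)
    fix t :: real assume "0 \<le> t"
    then have "hitting_time w (w t) \<le> ereal t"
      unfolding hitting_time_def by (intro Inf_lower) auto
    then have "ereal (g (w t) - c) \<le> ereal t"
      using ge order.trans by blast
    then show "g (w t) \<le> c + t" by simp
  qed
next
  assume "\<forall>t\<ge>0. g (w t) \<le> c + t"
  then show "\<forall>y. ereal (g y - c) \<le> hitting_time w y"
    unfolding hitting_time_def by (auto intro!: Inf_greatest)
qed

lemma all_nonneg_rescale:
  fixes c :: real
  assumes c: "c > 0"
  shows "(\<forall>t\<ge>0. P t) \<longleftrightarrow> (\<forall>s\<ge>0. P (c * s))"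
proof
  assume all_s: "\<forall>s\<ge>0. P (c * s)"
  show "\<forall>t\<ge>0. P t"
  proof (intro allI impI)
    fix t :: real assume "0 \<le> t"
    then have "P (c * (t / c))"
      using c by (intro all_s[rule_format]) simp
    then show "P t"
      using c by simp
  qed
qed (use c in simp)

lemma escape_prob_rescale:
  assumes BM: "\<And>x. brownian_motion (M x) (B x) x" and \<xi>: "\<xi> > 0" and f: "valley f"
  shows "measure (M (sqrt \<xi> * x)) {\<omega> \<in> space (M (sqrt \<xi> * x)).
            \<forall>y. ereal (f y - f (sqrt \<xi> * x)) \<le> hitting_time (B (sqrt \<xi> * x) \<omega>) y}
       = measure (M x) {\<omega> \<in> space (M x).
            \<forall>y. ereal (f (sqrt \<xi> * y) / \<xi> - f (sqrt \<xi> * x) / \<xi>) \<le> hitting_time (B x \<omega>) y}"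
    (is "measure _ ?E = measure _ ?E\<xi>")
proof -
  define x' where "x' = sqrt \<xi> * x"
  define f\<xi> where "f\<xi> = (\<lambda>y. f (sqrt \<xi> * y) / \<xi>)"
  define W where "W = (\<lambda>\<omega> t. B x' \<omega> (\<xi> * t) / sqrt \<xi>)"
  have W: "brownian_motion (M x') W x"
    using brownian_motion_scale[OF BM[of x'] \<xi>] \<xi> by (simp add: W_def x'_def)
  have f\<xi>: "valley f\<xi>"
    using valley_rescale[OF f, of "sqrt \<xi>" "1 / \<xi>"] \<xi> by (simp add: f\<xi>_def)
  have "?E = {\<omega> \<in> space (M x'). \<forall>t\<ge>0. f\<xi> (W \<omega> t) \<le> f\<xi> x + t}"
  proof -
    have rescaled: "a / \<xi> \<le> b / \<xi> + s \<longleftrightarrow> a \<le> b + \<xi> * s" for a b s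
      using \<xi> by (simp add: field_simps)
    have "f\<xi> (W \<omega> s) = f (B x' \<omega> (\<xi> * s)) / \<xi>" "f\<xi> x = f x' / \<xi>" for \<omega> s
      using \<xi> by (simp_all add: f\<xi>_def W_def x'_def)
    then have "(\<forall>t\<ge>0. f (B x' \<omega> t) \<le> f x' + t) \<longleftrightarrow> (\<forall>s\<ge>0. f\<xi> (W \<omega> s) \<le> f\<xi> x + s)" for \<omega>
      by (simp add: all_nonneg_rescale[OF \<xi>, of "\<lambda>t. f (B x' \<omega> t) \<le> f x' + t"] rescaled)
    then show ?thesis
      by (simp add: hitting_time_ge_iff x'_def)
  qed
  then have "measure (M x') ?E = measure (M x) {\<omega> \<in> space (M x). \<forall>t\<ge>0. f\<xi> (B x \<omega> t) \<le> f\<xi> x + t}"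
    using brownian_motion_prob_below_line_eq[OF W BM f\<xi>] by (simp add: x'_def)
  also have "\<dots> = measure (M x) ?E\<xi>"
    using hitting_time_ge_iff[of f\<xi> "f\<xi> x"] by (simp add: f\<xi>_def)
  finally show ?thesis by (simp add: x'_def)
qed

theorem lemma2p2:
  fixes M :: "real \<Rightarrow> 'a measure" and B :: "real \<Rightarrow> 'a \<Rightarrow> real \<Rightarrow> real"
  assumes BM: "\<And>x. brownian_motion (M x) (B x) x"
  shows "(\<forall>\<xi> f. \<xi> > 0 \<longrightarrow> f \<in> admissible \<xi> \<longrightarrow>
            (let f\<xi> = (\<lambda>x. f (sqrt \<xi> * x) / \<xi>) in
               f\<xi> \<in> admissible 1 \<and> energy M B f = ennreal (sqrt \<xi>) * energy M B f\<xi>))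
         \<and> (\<forall>\<xi>>0. rate M B \<xi> = ennreal (sqrt \<xi>) * rate M B 1)"
proof -
  have admissible: "(\<lambda>x. f (sqrt \<xi> * x) / \<xi>) \<in> admissible 1" if "\<xi> > 0" "f \<in> admissible \<xi>" for \<xi> f
    using imageI[OF that(2), of "\<lambda>f x. f (sqrt \<xi> * x) / \<xi>"] admissible_rescale_image[OF that(1)]
    by simp
  have energy: "energy M B f = ennreal (sqrt \<xi>) * energy M B (\<lambda>x. f (sqrt \<xi> * x) / \<xi>)"
    if \<xi>: "\<xi> > 0" and f: "f \<in> admissible \<xi>" for \<xi> f
    unfolding energy_def using \<xi>
    by (subst nn_integral_lborel_stretch[of "sqrt \<xi>"])
       (simp_all add: escape_prob_rescale[OF BM \<xi> admissible_valley[OF f]])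
  have "rate M B \<xi> = ennreal (sqrt \<xi>) * rate M B 1" if \<xi>: "\<xi> > 0" for \<xi>
  proof -
    have "rate M B \<xi> = (INF f\<in>admissible \<xi>. ennreal (sqrt \<xi>) * energy M B (\<lambda>x. f (sqrt \<xi> * x) / \<xi>))"
      unfolding rate_def using energy[OF \<xi>] by (intro INF_cong) auto
    also have "\<dots> = ennreal (sqrt \<xi>) * (INF g\<in>(\<lambda>f x. f (sqrt \<xi> * x) / \<xi>) ` admissible \<xi>. energy M B g)"
      using \<xi> by (simp add: ennreal_mult_INF image_comp)
    finally show ?thesis
      by (simp add: admissible_rescale_image[OF \<xi>] rate_def)
  qed
  with admissible energy show ?thesis
    unfolding Let_def by blast
qed

end
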